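(* Let $A$ and $B$ be real symmetric $n\times n$ matrices. Let $\lambda_1$ be the eigenvalue of $A$ of largest absolute value, assumed to have multiplicity one, and let $\lambda_2$ be an eigenvalue of $A$ of second-largest absolute value. Let $\mu_1$ be an eigenvalue of $B$ of largest absolute value (so $\|A\|=|\lambda_1|$, $\|B\|=|\mu_1|$). Suppose $\kappa\in[0,1)$ satisfies $|\lambda_2|\le \kappa|\lambda_1|$, let $\eta=\|A-B\|$, and assume $|\mu_1|-\eta\ge \kappa|\lambda_1|$. Let $v(A)$ and $v(B)$ be unit eigenvectors of $A$ and $B$ associated with $\lambda_1$ and $\mu_1$ respectively, with signs chosen so that $v(A)\cdot v(B)\ge 0$. Then $$\|v(A)-v(B)\|^2\le 2\left(1-\frac{1}{|\lambda_1|}\sqrt{\frac{(|\mu_1|-\eta)^2-\lambda_1^2\kappa^2}{1-\kappa^2}}\right).$$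
   Context: $\|\cdot\|$ denotes the Euclidean norm on vectors and the associated spectral norm on matrices. *)

theory Defs
  imports "HOL-Analysis.Analysis"
begin

definition symmetric_matrix :: "real^'n^'n \<Rightarrow> bool" where
  "symmetric_matrix A \<longleftrightarrow> transpose A = A"

definition is_eigenvalue :: "real^'n^'n \<Rightarrow> real \<Rightarrow> bool" where
  "is_eigenvalue A l \<longleftrightarrow> (\<exists>v. v \<noteq> 0 \<and> A *v v = l *\<^sub>R v)"

definition eigenspace :: "real^'n^'n \<Rightarrow> real \<Rightarrow> (real^'n) set" where
  "eigenspace A l = {v. A *v v = l *\<^sub>R v}"

definition spec_norm :: "real^'n^'n \<Rightarrow> real" where
  "spec_norm A = onorm (\<lambda>x. A *v x)"

end

theory Submission
  imports Defs
begin

text \<open>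
  Write \<open>c = v(A) \<bullet> v(B)\<close>, so that \<open>\<parallel>v(A) - v(B)\<parallel>\<^sup>2 = 2 - 2c\<close>. Splitting
  \<open>v(B) = c v(A) + w\<close> with \<open>w \<bottom> v(A)\<close>, the orthogonal complement of \<open>v(A)\<close> is
  invariant under the symmetric matrix \<open>A\<close>, and all eigenvalues of \<open>A\<close> there are
  at most \<open>\<kappa>\<bar>\<lambda>\<^sub>1\<bar>\<close> in absolute value, hence \<open>\<parallel>A w\<parallel> \<le> \<kappa>\<bar>\<lambda>\<^sub>1\<bar>\<parallel>w\<parallel>\<close>. Therefore
  \<open>(\<bar>\<mu>\<^sub>1\<bar> - \<eta>)\<^sup>2 \<le> \<parallel>A v(B)\<parallel>\<^sup>2 \<le> c\<^sup>2\<lambda>\<^sub>1\<^sup>2 + \<kappa>\<^sup>2\<lambda>\<^sub>1\<^sup>2(1 - c\<^sup>2)\<close>, which is a lower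
  bound on \<open>c\<close>. The norm bound on an invariant subspace is the variational
  characterisation of the spectral norm: a maximiser \<open>u\<close> of \<open>\<parallel>A x\<parallel>\<^sup>2\<close> on the unit
  sphere of the subspace is an eigenvector of \<open>A\<^sup>2\<close>, and from it one obtains an
  eigenvector of \<open>A\<close> for the eigenvalue \<open>\<plusminus>\<parallel>A u\<parallel>\<close>.
\<close>

lemma symmetric_matrix_inner:
  fixes A :: "real^'n^'n"
  assumes "symmetric_matrix A"
  shows "(A *v x) \<bullet> y = x \<bullet> (A *v y)"
proof -
  have "x \<bullet> (A *v y) = (transpose A *v x) \<bullet> y"
    by (simp add: dot_lmul_matrix)
  with assms show ?thesis by (simp add: symmetric_matrix_def)
qed

lemma quadratic_nonpos_imp_linear_coeff_zero:
  fixes p C :: real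
  assumes "\<And>t. 2 * t * p + t\<^sup>2 * C \<le> 0"
  shows "p = 0"
proof (rule ccontr)
  assume "p \<noteq> 0"
  define D where "D = \<bar>C\<bar> + 1"
  have D: "D > 0" and DC: "2 * D + C > 0" unfolding D_def by (simp_all add: abs_if)
  have "D\<^sup>2 * (2 * (p/D) * p + (p/D)\<^sup>2 * C) \<le> 0"
    using assms[of "p/D"] by (simp add: mult_nonneg_nonpos)
  moreover have "D\<^sup>2 * (2 * (p/D) * p + (p/D)\<^sup>2 * C) = p\<^sup>2 * (2 * D + C)"
    using D by (simp add: field_simps power2_eq_square)
  ultimately have "p\<^sup>2 * (2 * D + C) \<le> 0" by simp
  with DC \<open>p \<noteq> 0\<close> show False by (simp add: mult_le_0_iff)
qed

lemma symmetric_maximiser_eigenvector_square: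
  fixes A :: "real^'n^'n"
  assumes sym: "symmetric_matrix A"
    and S: "subspace S" and inv: "\<And>x. x \<in> S \<Longrightarrow> A *v x \<in> S"
    and u: "u \<in> S" "u \<bullet> u = 1"
    and max: "\<And>x. x \<in> S \<Longrightarrow> (norm (A *v x))\<^sup>2 \<le> (norm (A *v u))\<^sup>2 * (norm x)\<^sup>2"
  shows "A *v (A *v u) = (norm (A *v u))\<^sup>2 *\<^sub>R u"
proof -
  define M where "M = (norm (A *v u))\<^sup>2"
  define g where "g = A *v (A *v u)"
  have g_orth: "h \<bullet> g = 0" if hS: "h \<in> S" and hu: "h \<bullet> u = 0" for h
  proof (rule quadratic_nonpos_imp_linear_coeff_zero)
    fix t :: real
    have "(norm (A *v (u + t *\<^sub>R h)))\<^sup>2 \<le> M * (norm (u + t *\<^sub>R h))\<^sup>2"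
      unfolding M_def using max S u hS by (simp add: subspace_add subspace_scale)
    moreover have "(norm (u + t *\<^sub>R h))\<^sup>2 = 1 + t\<^sup>2 * (norm h)\<^sup>2"
      using u hu unfolding power2_norm_eq_inner
      by (simp add: inner_add_left inner_add_right inner_commute power2_eq_square)
    moreover have "(A *v u) \<bullet> (A *v h) = h \<bullet> g"
      unfolding g_def using symmetric_matrix_inner[OF sym, of "A *v u" h]
      by (simp add: inner_commute)
    ultimately have "M + 2 * t * (h \<bullet> g) + t\<^sup>2 * (norm (A *v h))\<^sup>2 \<le> M * (1 + t\<^sup>2 * (norm h)\<^sup>2)"
      unfolding M_def power2_norm_eq_inner using u(2) hu
      by (simp add: matrix_vector_right_distrib matrix_vector_mult_scaleR
          inner_add_left inner_add_right inner_commute power2_eq_square algebra_simps)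
    then show "2 * t * (h \<bullet> g) + t\<^sup>2 * ((norm (A *v h))\<^sup>2 - M * (norm h)\<^sup>2) \<le> 0"
      by (simp add: algebra_simps)
  qed
  have gu: "g \<bullet> u = M"
    unfolding g_def M_def using symmetric_matrix_inner[OF sym, of "A *v u" u]
    by (simp add: power2_norm_eq_inner)
  define h where "h = g - (g \<bullet> u) *\<^sub>R u"
  have hS: "h \<in> S" unfolding h_def g_def using S u inv by (simp add: subspace_diff subspace_scale)
  have hu: "h \<bullet> u = 0" unfolding h_def using u by (simp add: inner_diff_left)
  have "h \<bullet> h = h \<bullet> g - (g \<bullet> u) * (h \<bullet> u)"
    unfolding h_def by (simp add: inner_diff_right algebra_simps)
  also have "\<dots> = 0" using g_orth[OF hS hu] hu by simp
  finally have "h = 0" by simp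
  then show ?thesis using gu unfolding h_def g_def M_def by simp
qed

text \<open>If \<open>A\<^sup>2 u = s\<^sup>2 u\<close>, then either \<open>A u = -s u\<close> or \<open>A u + s u\<close> is an eigenvector for \<open>s\<close>.\<close>

lemma eigenvector_from_square_eigenvector:
  fixes A :: "real^'n^'n"
  assumes S: "subspace S" and inv: "\<And>x. x \<in> S \<Longrightarrow> A *v x \<in> S"
    and u: "u \<in> S" "u \<noteq> 0" and s: "s \<ge> 0"
    and sq: "A *v (A *v u) = s\<^sup>2 *\<^sub>R u"
  obtains y l where "y \<in> S" "y \<noteq> 0" "A *v y = l *\<^sub>R y" "\<bar>l\<bar> = s"
proof (cases "A *v u + s *\<^sub>R u = 0")
  case True
  then have "A *v u = (- s) *\<^sub>R u" by (simp add: eq_neg_iff_add_eq_0 add.commute)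
  with u s show ?thesis by (intro that[of u "- s"]) simp_all
next
  case False
  define y where "y = A *v u + s *\<^sub>R u"
  have "A *v y = s *\<^sub>R y"
    unfolding y_def using sq
    by (simp add: matrix_vector_right_distrib matrix_vector_mult_scaleR algebra_simps power2_eq_square)
  moreover have "y \<in> S" unfolding y_def using S u inv by (simp add: subspace_add subspace_scale)
  ultimately show ?thesis using that False s y_def by simp
qed

lemma symmetric_norm_le_on_invariant_subspace:
  fixes A :: "real^'n^'n"
  assumes sym: "symmetric_matrix A"
    and S: "subspace S" and inv: "\<And>x. x \<in> S \<Longrightarrow> A *v x \<in> S"
    and eig: "\<And>y l. y \<in> S \<Longrightarrow> y \<noteq> 0 \<Longrightarrow> A *v y = l *\<^sub>R y \<Longrightarrow> \<bar>l\<bar> \<le> K"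
    and w: "w \<in> S"
  shows "norm (A *v w) \<le> K * norm w"
proof (cases "w = 0")
  case True then show ?thesis by simp
next
  case False
  define f where "f = (\<lambda>x::real^'n. (norm (A *v x))\<^sup>2)"
  have compact: "compact (sphere 0 1 \<inter> S)"
    using S by (simp add: compact_Int_closed closed_subspace)
  have "w /\<^sub>R norm w \<in> sphere 0 1 \<inter> S" using False w S by (simp add: subspace_scale)
  then have nonempty: "sphere 0 1 \<inter> S \<noteq> {}" by blast
  have cont: "continuous_on (sphere 0 1 \<inter> S) f" unfolding f_def by (intro continuous_intros)
  obtain u where uS: "u \<in> sphere 0 1 \<inter> S"
    and umax: "\<And>x. x \<in> sphere 0 1 \<inter> S \<Longrightarrow> f x \<le> f u"
    using continuous_attains_sup[OF compact nonempty cont] by blast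
  have max: "(norm (A *v x))\<^sup>2 \<le> (norm (A *v u))\<^sup>2 * (norm x)\<^sup>2" if "x \<in> S" for x
  proof (cases "x = 0")
    case True then show ?thesis by simp
  next
    case False
    then have "f (x /\<^sub>R norm x) \<le> f u" using umax that S by (simp add: subspace_scale)
    with False show ?thesis
      unfolding f_def by (simp add: matrix_vector_mult_scaleR field_simps power2_eq_square)
  qed
  define s where "s = norm (A *v u)"
  have u: "u \<in> S" "u \<noteq> 0" "u \<bullet> u = 1" using uS by (auto simp: norm_eq_1)
  have "A *v (A *v u) = s\<^sup>2 *\<^sub>R u"
    unfolding s_def by (rule symmetric_maximiser_eigenvector_square[OF sym S inv u(1,3) max])
  then obtain y l where "y \<in> S" "y \<noteq> 0" "A *v y = l *\<^sub>R y" "\<bar>l\<bar> = s"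
    using eigenvector_from_square_eigenvector[OF S inv u(1,2), of s] s_def by auto
  then have sK: "s \<le> K" using eig by blast
  have "(norm (A *v w))\<^sup>2 \<le> s\<^sup>2 * (norm w)\<^sup>2" using max[OF w] unfolding s_def .
  also have "\<dots> \<le> (K * norm w)\<^sup>2"
    using sK s_def by (simp add: power_mult_distrib mult_right_mono power_mono)
  finally have "(norm (A *v w))\<^sup>2 \<le> (K * norm w)\<^sup>2" .
  moreover have "0 \<le> K * norm w" using sK s_def by (simp add: order_trans[OF norm_ge_zero])
  ultimately show ?thesis by (rule power2_le_imp_le)
qed

lemma symmetric_orthogonal_complement_invariant:
  fixes A :: "real^'n^'n"
  assumes "symmetric_matrix A" "A *v v = l *\<^sub>R v" "x \<bullet> v = 0"
  shows "(A *v x) \<bullet> v = 0"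
  using symmetric_matrix_inner[OF assms(1), of x v] assms(2,3) by simp

lemma eigenvalue_ne_on_orthogonal_complement:
  fixes A :: "real^'n^'n"
  assumes "dim (eigenspace A l) = 1" "A *v v = l *\<^sub>R v" "v \<noteq> 0"
    and "y \<noteq> 0" "y \<bullet> v = 0" "A *v y = m *\<^sub>R y"
  shows "m \<noteq> l"
proof
  assume "m = l"
  then have sub: "{y, v} \<subseteq> eigenspace A l" using assms unfolding eigenspace_def by auto
  have "independent {y, v}"
    by (rule pairwise_orthogonal_independent)
       (use assms in \<open>auto simp: pairwise_def orthogonal_def inner_commute\<close>)
  moreover have "y \<noteq> v" using assms(3,5) by auto
  ultimately show False using independent_card_le_dim[OF sub] assms(1) by simp
qed

lemma norm_mult_le_spec_norm:
  fixes A :: "real^'n^'n"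
  shows "norm (A *v x) \<le> spec_norm A * norm x"
  unfolding spec_norm_def by (rule onorm[OF matrix_vector_mul_bounded_linear])

lemma abs_eigenvalue_le_norm_plus_spec_norm:
  fixes A B :: "real^'n^'n"
  assumes "norm v = 1" "B *v v = m *\<^sub>R v"
  shows "\<bar>m\<bar> \<le> norm (A *v v) + spec_norm (A - B)"
proof -
  have "\<bar>m\<bar> = norm (A *v v - (A - B) *v v)"
    using assms by (simp add: matrix_vector_mult_diff_rdistrib)
  also have "\<dots> \<le> norm (A *v v) + norm ((A - B) *v v)" by (rule norm_triangle_ineq4)
  finally show ?thesis using norm_mult_le_spec_norm[of "A - B" v] assms(1) by simp
qed

lemma norm_sq_le_by_orthogonal_decomposition:
  fixes A :: "real^'n^'n"
  assumes sym: "symmetric_matrix A" and ev: "A *v u = l *\<^sub>R u"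
    and unit: "norm u = 1" "norm v = 1"
    and bound: "\<And>w. w \<bullet> u = 0 \<Longrightarrow> norm (A *v w) \<le> K * norm w"
  shows "(norm (A *v v))\<^sup>2 \<le> (u \<bullet> v)\<^sup>2 * l\<^sup>2 + K\<^sup>2 * (1 - (u \<bullet> v)\<^sup>2)"
proof -
  define c where "c = u \<bullet> v"
  define w where "w = v - c *\<^sub>R u"
  have uu: "u \<bullet> u = 1" "v \<bullet> v = 1" using unit by (simp_all add: norm_eq_1)
  have wu: "w \<bullet> u = 0"
    unfolding w_def c_def inner_diff_left inner_scaleR_left uu by (simp add: inner_commute)
  have cross: "u \<bullet> (A *v w) = 0"
    using symmetric_orthogonal_complement_invariant[OF sym ev wu] by (simp add: inner_commute)
  have "A *v v = (c * l) *\<^sub>R u + A *v w"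
    unfolding w_def using ev by (simp add: matrix_vector_mult_diff_distrib matrix_vector_mult_scaleR)
  then have "(norm (A *v v))\<^sup>2 = c\<^sup>2 * l\<^sup>2 + (norm (A *v w))\<^sup>2"
    unfolding power2_norm_eq_inner using uu cross
    by (simp add: inner_add_left inner_add_right inner_commute power2_eq_square algebra_simps)
  moreover have "(norm (A *v w))\<^sup>2 \<le> K\<^sup>2 * (norm w)\<^sup>2"
    using bound[OF wu] by (simp add: power_mono power_mult_distrib[symmetric])
  moreover have "(norm w)\<^sup>2 = 1 - c\<^sup>2"
    unfolding power2_norm_eq_inner w_def c_def using uu
    by (simp add: inner_diff_left inner_diff_right inner_commute power2_eq_square algebra_simps)
  ultimately show ?thesis unfolding c_def by simp
qed

lemma cosine_lower_bound:
  fixes c l x \<kappa> :: real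
  assumes "0 \<le> c" "l \<noteq> 0" "0 \<le> \<kappa>" "\<kappa> < 1" "\<kappa> * \<bar>l\<bar> \<le> x"
    and "x\<^sup>2 \<le> c\<^sup>2 * l\<^sup>2 + (\<kappa> * \<bar>l\<bar>)\<^sup>2 * (1 - c\<^sup>2)"
  shows "(1 / \<bar>l\<bar>) * sqrt ((x\<^sup>2 - l\<^sup>2 * \<kappa>\<^sup>2) / (1 - \<kappa>\<^sup>2)) \<le> c"
proof -
  have "1 - \<kappa>\<^sup>2 > 0" using assms(3,4) by (simp add: power_less_one_iff abs_if)
  moreover have "x\<^sup>2 - l\<^sup>2 * \<kappa>\<^sup>2 \<le> (c * \<bar>l\<bar>)\<^sup>2 * (1 - \<kappa>\<^sup>2)"
    using assms(6) by (simp add: power_mult_distrib algebra_simps)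
  ultimately have "(x\<^sup>2 - l\<^sup>2 * \<kappa>\<^sup>2) / (1 - \<kappa>\<^sup>2) \<le> (c * \<bar>l\<bar>)\<^sup>2"
    by (simp add: divide_le_eq)
  then have "sqrt ((x\<^sup>2 - l\<^sup>2 * \<kappa>\<^sup>2) / (1 - \<kappa>\<^sup>2)) \<le> c * \<bar>l\<bar>"
    using real_sqrt_le_mono assms(1) by fastforce
  with assms(2) show ?thesis by (simp add: divide_le_eq mult.commute)
qed

theorem mainTheorem1:
  fixes A B :: "real^'n^'n" and l1 l2 m1 \<kappa> :: real and vA vB :: "real^'n"
  assumes "symmetric_matrix A" and "symmetric_matrix B"
    and "is_eigenvalue A l1"
    and "\<And>l. is_eigenvalue A l \<Longrightarrow> \<bar>l\<bar> \<le> \<bar>l1\<bar>"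
    and "dim (eigenspace A l1) = 1"
    and "is_eigenvalue A l2" and "l2 \<noteq> l1"
    and "\<And>l. is_eigenvalue A l \<Longrightarrow> l \<noteq> l1 \<Longrightarrow> \<bar>l\<bar> \<le> \<bar>l2\<bar>"
    and "is_eigenvalue B m1"
    and "\<And>m. is_eigenvalue B m \<Longrightarrow> \<bar>m\<bar> \<le> \<bar>m1\<bar>"
    and "0 \<le> \<kappa>" and "\<kappa> < 1"
    and "\<bar>l2\<bar> \<le> \<kappa> * \<bar>l1\<bar>"
    and "\<bar>m1\<bar> - spec_norm (A - B) \<ge> \<kappa> * \<bar>l1\<bar>"
    and "norm vA = 1" and "A *v vA = l1 *\<^sub>R vA"
    and "norm vB = 1" and "B *v vB = m1 *\<^sub>R vB"
    and "vA \<bullet> vB \<ge> 0"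
  shows "(norm (vA - vB))\<^sup>2 \<le> 2 * (1 - (1 / \<bar>l1\<bar>) *
           sqrt (((\<bar>m1\<bar> - spec_norm (A - B))\<^sup>2 - l1\<^sup>2 * \<kappa>\<^sup>2) / (1 - \<kappa>\<^sup>2)))"
proof -
  have l1: "l1 \<noteq> 0" using assms(4)[OF assms(6)] assms(7) by auto
  have "\<bar>l\<bar> \<le> \<kappa> * \<bar>l1\<bar>" if "y \<in> {x. x \<bullet> vA = 0}" "y \<noteq> 0" "A *v y = l *\<^sub>R y" for y l
    using eigenvalue_ne_on_orthogonal_complement[OF assms(5,16), of y l] that assms(8,13,15)
    unfolding is_eigenvalue_def by fastforce
  then have "norm (A *v w) \<le> \<kappa> * \<bar>l1\<bar> * norm w" if "w \<bullet> vA = 0" for w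
    using symmetric_norm_le_on_invariant_subspace[OF assms(1) subspace_hyperplane2]
      symmetric_orthogonal_complement_invariant[OF assms(1,16)] that by blast
  then have "(norm (A *v vB))\<^sup>2 \<le> (vA \<bullet> vB)\<^sup>2 * l1\<^sup>2 + (\<kappa> * \<bar>l1\<bar>)\<^sup>2 * (1 - (vA \<bullet> vB)\<^sup>2)"
    using norm_sq_le_by_orthogonal_decomposition[OF assms(1,16,15,17)] by blast
  moreover have "\<bar>m1\<bar> - spec_norm (A - B) \<le> norm (A *v vB)"
    using abs_eigenvalue_le_norm_plus_spec_norm[OF assms(17,18), of A] by simp
  ultimately have "(\<bar>m1\<bar> - spec_norm (A - B))\<^sup>2 \<le> (vA \<bullet> vB)\<^sup>2 * l1\<^sup>2 + (\<kappa> * \<bar>l1\<bar>)\<^sup>2 * (1 - (vA \<bullet> vB)\<^sup>2)"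
    using assms(11,14) by (smt (verit) power_mono mult_nonneg_nonneg abs_ge_zero)
  then have "(1 / \<bar>l1\<bar>) * sqrt (((\<bar>m1\<bar> - spec_norm (A - B))\<^sup>2 - l1\<^sup>2 * \<kappa>\<^sup>2) / (1 - \<kappa>\<^sup>2)) \<le> vA \<bullet> vB"
    using cosine_lower_bound assms(11,12,14,19) l1 by blast
  moreover have "(norm (vA - vB))\<^sup>2 = 2 - 2 * (vA \<bullet> vB)"
    using assms(15,17) by (simp add: dot_norm_neg field_simps)
  ultimately show ?thesis by simp
qed

end
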